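(* In the setting of the switching procedure below (with $\lambda=\Theta(\log n)$, $k=\Theta(\lambda\log n)$) and with $D:=\frac{2en\ln n}{k}$, consider the moment when the $(1+1)$ EA phase first holds an individual at distance at most $D$ from the optimum. The expected number of further $(1+1)$ EA iterations until the procedure switches to the $(1+(\lambda,\lambda))$ GA (or finds the optimum) is $O(n\log\log n)$.
   Context: The procedure maximizes $\mathrm{OneMax}(x)=\sum_{i=1}^n x_i$ on $\{0,1\}^n$ (optimum $1^n$; distance = number of zero-bits). It starts from a uniformly random point and runs the $(1+1)$ EA (each iteration: create one offspring by flipping each bit independently with probability $1/n$, accept it if its fitness is at least the current one) until, for the first time, $k$ consecutive $(1+1)$ EA iterations fail to create a strictly better offspring; then it switches irrevocably to the $(1+(\lambda,\lambda))$ GA with population size $\lambda$. Here $\lambda=\lambda(n)=\Theta(\log n)$ and $k=k(n)=\Theta(\lambda\log n)$. *)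

theory Defs
  imports "HOL-Probability.Probability" "HOL-Library.Landau_Symbols"
begin

text \<open>Bit strings of length n are boolean lists; True = one-bit.\<close>

definition onemax :: "bool list \<Rightarrow> nat" where
  "onemax x = length (filter id x)"

definition dist_opt :: "bool list \<Rightarrow> nat" where
  "dist_opt x = length x - onemax x"

fun flips :: "nat \<Rightarrow> real \<Rightarrow> bool list pmf" where
  "flips 0 p = return_pmf []"
| "flips (Suc m) p = bind_pmf (bernoulli_pmf p) (\<lambda>b. map_pmf (\<lambda>bs. b # bs) (flips m p))"

definition mutate :: "bool list \<Rightarrow> bool list pmf" where
  "mutate x = map_pmf (\<lambda>f. map2 (\<noteq>) x f) (flips (length x) (1 / real (length x)))"

text \<open>State of the (1+1) EA phase: current individual and the number of consecutive
  iterations without strict improvement. One (1+1) EA iteration:\<close>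
definition ea_step :: "bool list \<times> nat \<Rightarrow> (bool list \<times> nat) pmf" where
  "ea_step s = (case s of (x, c) \<Rightarrow>
     map_pmf (\<lambda>y. if onemax y > onemax x then (y, 0)
                   else if onemax y = onemax x then (y, Suc c)
                   else (x, Suc c)) (mutate x))"

text \<open>The (1+1) EA phase has ended: k consecutive failures (switch to the GA) or optimum found.\<close>
definition ea_stopped :: "nat \<Rightarrow> bool list \<times> nat \<Rightarrow> bool" where
  "ea_stopped k s = (k \<le> snd s \<or> dist_opt (fst s) = 0)"

definition ea_step_stopped :: "nat \<Rightarrow> bool list \<times> nat \<Rightarrow> (bool list \<times> nat) pmf" where
  "ea_step_stopped k s = (if ea_stopped k s then return_pmf s else ea_step s)"

fun ea_iter :: "nat \<Rightarrow> nat \<Rightarrow> bool list \<times> nat \<Rightarrow> (bool list \<times> nat) pmf" where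
  "ea_iter k 0 s = return_pmf s"
| "ea_iter k (Suc t) s = bind_pmf (ea_iter k t s) (ea_step_stopped k)"

text \<open>Expected number of (1+1) EA iterations, starting in state s, until the phase ends:
  E[T] = sum over t of Pr[T > t].\<close>
definition ea_remaining :: "nat \<Rightarrow> bool list \<times> nat \<Rightarrow> ennreal" where
  "ea_remaining k s = (\<Sum>t. ennreal (measure_pmf.prob (ea_iter k t s) {s'. \<not> ea_stopped k s'}))"

end

theory Submission
  imports Defs "HOL-Real_Asymp.Real_Asymp"
begin

text \<open>At distance d, flipping exactly one of the d zero-bits and nothing else improves the
  fitness; this has probability d (1/n) (1 - 1/n)^(n-1) \<ge> d/(en). Hence the (1+1) EA spends in
  expectation at most min(k, en/d) iterations at distance d before it improves or collects k
  consecutive failures. Summed over d \<le> D = 2en ln n / k, the levels d \<le> en/k contribute at most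
  en + k and the others at most en (ln D - ln (en/k)) = en ln (2 ln n).
  Formally, the per-level bounds add up to a potential of the current state whose expected value
  drops by at least 1 in every iteration, so its initial value bounds the expected running time.\<close>

lemma set_pmf_flips: "set_pmf (flips m p) \<subseteq> {f. length f = m}"
  by (induction m) auto

lemma length_mutate: "y \<in> set_pmf (mutate x) \<Longrightarrow> length y = length x"
  using set_pmf_flips by (fastforce simp: mutate_def)

lemma pmf_map_Cons: "pmf (map_pmf (Cons b) M) (c # fs) = (if b = c then pmf M fs else 0)"
proof (cases "b = c")
  case True
  then show ?thesis by (simp add: pmf_map_inj' inj_def)
next
  case False
  then have "c # fs \<notin> set_pmf (map_pmf (Cons b) M)" by auto
  then show ?thesis using False by (simp add: set_pmf_eq)
qed

lemma pmf_flips: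
  assumes "0 \<le> p" "p \<le> 1"
  shows "pmf (flips m p) f = (if length f = m then (\<Prod>i<m. if f ! i then p else 1 - p) else 0)"
proof (induction m arbitrary: f)
  case 0
  then show ?case by (cases f) auto
next
  case (Suc m)
  show ?case
  proof (cases f)
    case Nil
    then have "f \<notin> set_pmf (flips (Suc m) p)" using set_pmf_flips[of "Suc m" p] by auto
    then show ?thesis using Nil by (simp add: set_pmf_eq)
  next
    case (Cons c fs)
    have "pmf (flips (Suc m) p) f = (if c then p else 1 - p) * pmf (flips m p) fs"
      using assms by (simp add: Cons pmf_bind pmf_map_Cons)
    moreover have "(\<Prod>i<Suc m. if (c # fs) ! i then p else 1 - p)
        = (if c then p else 1 - p) * (\<Prod>i<m. if fs ! i then p else 1 - p)"
      by (subst prod.lessThan_Suc_shift) simp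
    ultimately show ?thesis using Suc[of fs] by (simp add: Cons)
  qed
qed

definition single_flip :: "nat \<Rightarrow> nat \<Rightarrow> bool list" where
  "single_flip n j = (replicate n False)[j := True]"

lemma pmf_flips_single_flip:
  assumes "0 \<le> p" "p \<le> 1" "j < n"
  shows "pmf (flips n p) (single_flip n j) = p * (1 - p) ^ (n - 1)"
proof -
  have "(\<Prod>i<n. if single_flip n j ! i then p else 1 - p) = (\<Prod>i<n. if i = j then p else 1 - p)"
    using assms by (intro prod.cong) (auto simp: single_flip_def)
  also have "\<dots> = p * (\<Prod>i\<in>{..<n} - {j}. 1 - p)"
    using assms by (subst prod.remove[of _ j]) auto
  also have "\<dots> = p * (1 - p) ^ (n - 1)"
    using assms by simp
  finally show ?thesis
    using assms by (simp add: pmf_flips single_flip_def)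
qed

lemma onemax_eq_card: "onemax x = card {i. i < length x \<and> x ! i}"
  unfolding onemax_def by (simp add: length_filter_conv_card)

lemma onemax_le_length: "onemax x \<le> length x"
  by (simp add: onemax_def)

lemma dist_opt_eq_card: "dist_opt x = card {i. i < length x \<and> \<not> x ! i}"
proof -
  have "length (filter id x) + length (filter (\<lambda>b. \<not> id b) x) = length x"
    by (rule sum_length_filter_compl)
  then show ?thesis
    unfolding dist_opt_def onemax_def by (simp add: length_filter_conv_card)
qed

lemma onemax_single_flip:
  assumes "j < length x" "\<not> x ! j"
  shows "onemax (map2 (\<noteq>) x (single_flip (length x) j)) = Suc (onemax x)"
proof -
  have flipped: "map2 (\<noteq>) x (single_flip (length x) j) = x[j := True]"
    using assms by (intro nth_equalityI) (auto simp: single_flip_def nth_list_update)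
  have "{i. i < length (x[j := True]) \<and> x[j := True] ! i} = insert j {i. i < length x \<and> x ! i}"
    using assms by (auto simp: nth_list_update)
  then show ?thesis
    using assms unfolding flipped onemax_eq_card by simp
qed

definition single_flip_prob :: "nat \<Rightarrow> real" where
  "single_flip_prob n = 1 / real n * (1 - 1 / real n) ^ (n - 1)"

lemma prob_mutate_improves:
  "real (dist_opt x) * single_flip_prob (length x)
     \<le> measure_pmf.prob (mutate x) {y. onemax x < onemax y}"
proof -
  define n where "n = length x"
  define p where "p = 1 / real n"
  define Z where "Z = {j. j < n \<and> \<not> x ! j}"
  define M where "M = flips n p"
  have p: "0 \<le> p" "p \<le> 1"
    by (cases "n = 0") (auto simp: p_def divide_le_eq_1)
  have "inj_on (single_flip n) Z"
  proof
    fix i j assume "i \<in> Z" "j \<in> Z" "single_flip n i = single_flip n j"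
    then have "single_flip n i ! i = single_flip n j ! i" by simp
    with \<open>i \<in> Z\<close> \<open>j \<in> Z\<close> show "i = j"
      by (auto simp: Z_def single_flip_def nth_list_update split: if_splits)
  qed
  then have "measure_pmf.prob M (single_flip n ` Z) = (\<Sum>j\<in>Z. pmf M (single_flip n j))"
    by (simp add: measure_measure_pmf_finite sum.reindex Z_def)
  also have "\<dots> = real (dist_opt x) * single_flip_prob n"
    using p by (simp add: M_def Z_def pmf_flips_single_flip dist_opt_eq_card n_def p_def
        single_flip_prob_def)
  finally have "real (dist_opt x) * single_flip_prob n = measure_pmf.prob M (single_flip n ` Z)" ..
  also have "\<dots> \<le> measure_pmf.prob M ((\<lambda>f. map2 (\<noteq>) x f) -` {y. onemax x < onemax y})"
    using onemax_single_flip by (intro measure_pmf.finite_measure_mono) (auto simp: Z_def n_def)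
  finally show ?thesis
    by (simp add: mutate_def measure_map_pmf M_def n_def p_def)
qed

lemma single_flip_prob_nonneg: "0 \<le> single_flip_prob n"
  by (cases "n = 0") (auto simp: single_flip_prob_def)

lemma single_flip_prob_ge:
  assumes "1 \<le> n"
  shows "1 / (exp 1 * real n) \<le> single_flip_prob n"
proof -
  have "(1 - 1 / real n) ^ (n - 1) \<ge> inverse (exp 1)"
  proof (cases "n = 1")
    case False
    define m where "m = n - 1"
    have "0 < m" and "real n = real m + 1"
      using assms False by (auto simp: m_def)
    then have "(1 - 1 / real n) ^ (n - 1) = inverse ((1 + 1 / real m) ^ m)"
      by (simp add: m_def field_simps power_inverse)
    moreover have "(1 + 1 / real m) ^ m \<le> exp 1"
      using \<open>0 < m\<close> exp_ge_one_plus_x_over_n_power_n[of m 1] by simp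
    moreover have "0 < (1 + 1 / real m) ^ m"
      by (simp add: add_pos_nonneg)
    ultimately show ?thesis
      by (simp add: le_imp_inverse_le)
  qed (simp add: inverse_le_1_iff)
  then show ?thesis
    using assms by (simp add: single_flip_prob_def field_simps)
qed

lemma single_flip_prob_le:
  assumes "d \<le> n"
  shows "real d * single_flip_prob n \<le> 1"
proof (cases "n = 0")
  case False
  have "(1 - 1 / real n) ^ (n - 1) \<le> 1"
    using False by (intro power_le_one) auto
  then have "single_flip_prob n \<le> 1 / real n"
    by (simp add: single_flip_prob_def divide_right_mono)
  then have "real d * single_flip_prob n \<le> real n * (1 / real n)"
    using assms single_flip_prob_nonneg by (intro mult_mono) auto
  then show ?thesis
    using False by simp
qed (use assms in simp)

text \<open>The expected time spent at distance d, starting with c failures, if every iteration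
  improved with probability exactly d \<cdot> single_flip_prob n: a geometric series truncated after
  the k - c iterations left before the switch.\<close>

definition level_time :: "nat \<Rightarrow> nat \<Rightarrow> nat \<Rightarrow> nat \<Rightarrow> real" where
  "level_time k n d c = (\<Sum>j<k - c. (1 - real d * single_flip_prob n) ^ j)"

fun potential :: "nat \<Rightarrow> bool list \<times> nat \<Rightarrow> real" where
  "potential k (x, c) = (if dist_opt x = 0 then 0 else
     (\<Sum>i\<in>{1..<dist_opt x}. level_time k (length x) i 0) + level_time k (length x) (dist_opt x) c)"

lemma level_time_nonneg: "d \<le> n \<Longrightarrow> 0 \<le> level_time k n d c"
  unfolding level_time_def using single_flip_prob_le[of d n] by (intro sum_nonneg zero_le_power) simp

lemma level_time_unfold:
  "c < k \<Longrightarrow> level_time k n d c = 1 + (1 - real d * single_flip_prob n) * level_time k n d (Suc c)"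
proof -
  assume "c < k"
  then have "k - c = Suc (k - Suc c)" by simp
  then show ?thesis
    unfolding level_time_def by (simp only: sum.lessThan_Suc_shift) (simp add: sum_distrib_left)
qed

lemma potential_fresh: "potential k (x, 0) = (\<Sum>i\<in>{1..dist_opt x}. level_time k (length x) i 0)"
  by (cases "dist_opt x") (auto simp: atLeastLessThanSuc_atLeastAtMost[symmetric])

lemma potential_after_step:
  assumes "length y = length x" "dist_opt x \<noteq> 0"
  shows "potential k (if onemax x < onemax y then (y, 0)
            else if onemax y = onemax x then (y, Suc c) else (x, Suc c))
    \<le> (\<Sum>i\<in>{1..<dist_opt x}. level_time k (length x) i 0)
      + (if onemax x < onemax y then 0 else level_time k (length x) (dist_opt x) (Suc c))"
proof (cases "onemax x < onemax y")
  case True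
  then have "dist_opt y < dist_opt x"
    using assms(1) onemax_le_length[of y] by (simp add: dist_opt_def)
  then have "potential k (y, 0) \<le> (\<Sum>i\<in>{1..<dist_opt x}. level_time k (length x) i 0)"
    unfolding potential_fresh assms(1)
    by (intro sum_mono2) (auto intro: level_time_nonneg simp: dist_opt_def)
  with True show ?thesis
    by simp
next
  case False
  with assms show ?thesis
    by (auto simp: dist_opt_def)
qed

lemma expected_potential_after_step:
  assumes "length x = n" "dist_opt x = d" "d \<noteq> 0"
  shows "(\<integral>\<^sup>+ s'. ennreal (potential k s') \<partial>ea_step (x, c))
    \<le> ennreal ((\<Sum>i\<in>{1..<d}. level_time k n i 0)
        + level_time k n d (Suc c) * (1 - measure_pmf.prob (mutate x) {y. onemax x < onemax y}))"
proof -
  define A where "A = {y. onemax x < onemax y}"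
  define P where "P = measure_pmf.prob (mutate x) A"
  define W where "W = (\<Sum>i\<in>{1..<d}. level_time k n i 0)"
  define r where "r = level_time k n d (Suc c)"
  define select where "select = (\<lambda>y. if onemax x < onemax y then (y, 0)
     else if onemax y = onemax x then (y, Suc c) else (x, Suc c))"
  have "d \<le> n"
    using assms by (simp add: dist_opt_def)
  then have "0 \<le> W" "0 \<le> r" "P \<le> 1"
    by (auto simp: W_def r_def P_def intro!: sum_nonneg level_time_nonneg)
  have pointwise: "ennreal (potential k (select y)) \<le> ennreal W + ennreal r * indicator (- A) y"
    if "y \<in> set_pmf (mutate x)" for y
  proof -
    have bound: "potential k (select y) \<le> W + (if y \<in> A then 0 else r)"
      unfolding select_def A_def W_def r_def mem_Collect_eq assms(1,2)[symmetric]
      using length_mutate[OF that] assms by (intro potential_after_step) auto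
    show ?thesis
    proof (cases "y \<in> A")
      case True
      with bound show ?thesis
        by (simp add: ennreal_leI)
    next
      case False
      with bound have "ennreal (potential k (select y)) \<le> ennreal (W + r)"
        by (simp add: ennreal_leI)
      with False \<open>0 \<le> W\<close> \<open>0 \<le> r\<close> show ?thesis
        by (simp add: ennreal_plus)
    qed
  qed
  have "measure_pmf.prob (mutate x) (- A) = 1 - P"
    using measure_pmf.prob_compl[of A "mutate x"] by (simp add: Compl_eq_Diff_UNIV P_def)
  have "(\<integral>\<^sup>+ s'. ennreal (potential k s') \<partial>ea_step (x, c))
      = (\<integral>\<^sup>+ y. ennreal (potential k (select y)) \<partial>mutate x)"
    by (simp add: ea_step_def select_def nn_integral_map_pmf)
  also have "\<dots> \<le> (\<integral>\<^sup>+ y. ennreal W + ennreal r * indicator (- A) y \<partial>mutate x)"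
    by (intro nn_integral_mono_AE) (simp add: AE_measure_pmf_iff pointwise)
  also have "\<dots> = ennreal W + ennreal r * ennreal (1 - P)"
    using \<open>measure_pmf.prob (mutate x) (- A) = 1 - P\<close>
    by (simp add: nn_integral_add nn_integral_cmult measure_pmf.emeasure_eq_measure)
  also have "\<dots> = ennreal (W + r * (1 - P))"
    using \<open>0 \<le> W\<close> \<open>0 \<le> r\<close> \<open>P \<le> 1\<close> by (simp add: ennreal_mult ennreal_plus)
  finally show ?thesis
    by (simp add: W_def r_def P_def A_def)
qed

lemma potential_drift:
  assumes "\<not> ea_stopped k s"
  shows "1 + (\<integral>\<^sup>+ s'. ennreal (potential k s') \<partial>ea_step s) \<le> ennreal (potential k s)"
proof -
  obtain x c where s: "s = (x, c)" by (cases s)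
  define n d where "n = length x" and "d = dist_opt x"
  define P where "P = measure_pmf.prob (mutate x) {y. onemax x < onemax y}"
  define W where "W = (\<Sum>i\<in>{1..<d}. level_time k n i 0)"
  define r where "r = level_time k n d (Suc c)"
  have "c < k" "d \<noteq> 0" "d \<le> n"
    using assms by (auto simp: ea_stopped_def s d_def n_def dist_opt_def)
  then have "0 \<le> W" "0 \<le> r" "P \<le> 1"
    by (auto simp: W_def r_def P_def intro!: sum_nonneg level_time_nonneg)
  have expectation: "(\<integral>\<^sup>+ s'. ennreal (potential k s') \<partial>ea_step s) \<le> ennreal (W + r * (1 - P))"
    unfolding s W_def r_def P_def using \<open>d \<noteq> 0\<close>
    by (intro expected_potential_after_step) (simp_all add: n_def d_def)
  have "real d * single_flip_prob n \<le> P"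
    using prob_mutate_improves[of x] by (simp add: P_def d_def n_def)
  then have "r * (1 - P) \<le> (1 - real d * single_flip_prob n) * r"
    using \<open>0 \<le> r\<close> by (simp add: mult.commute mult_left_mono)
  then have "1 + (W + r * (1 - P)) \<le> W + level_time k n d c"
    using \<open>c < k\<close> by (simp add: level_time_unfold r_def)
  also have "\<dots> = potential k s"
    using \<open>d \<noteq> 0\<close> by (simp add: s W_def d_def n_def)
  finally have decrease: "1 + (W + r * (1 - P)) \<le> potential k s" .
  have "1 + (\<integral>\<^sup>+ s'. ennreal (potential k s') \<partial>ea_step s) \<le> 1 + ennreal (W + r * (1 - P))"
    using expectation by (rule add_left_mono)
  also have "\<dots> = ennreal (1 + (W + r * (1 - P)))"
    using \<open>0 \<le> W\<close> \<open>0 \<le> r\<close> \<open>P \<le> 1\<close> by (simp add: ennreal_plus)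
  also have "\<dots> \<le> ennreal (potential k s)"
    using decrease by (rule ennreal_leI)
  finally show ?thesis .
qed

lemma ea_remaining_le_potential:
  fixes F :: "bool list \<times> nat \<Rightarrow> ennreal"
  assumes drift: "\<And>z. \<not> ea_stopped k z \<Longrightarrow> 1 + (\<integral>\<^sup>+ y. F y \<partial>ea_step z) \<le> F z"
  shows "ea_remaining k s \<le> F s"
proof -
  let ?running = "{s'. \<not> ea_stopped k s'}"
  let ?P = "\<lambda>t. ennreal (measure_pmf.prob (ea_iter k t s) ?running)"
  have step: "indicator ?running z + (\<integral>\<^sup>+ y. F y \<partial>ea_step_stopped k z) \<le> F z" for z
    using drift[of z] by (cases "ea_stopped k z") (simp_all add: ea_step_stopped_def nn_integral_return_pmf)
  have partial_sums: "(\<Sum>t<T. ?P t) + (\<integral>\<^sup>+ y. F y \<partial>ea_iter k T s) \<le> F s" for T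
  proof (induction T)
    case 0
    then show ?case by (simp add: nn_integral_return_pmf)
  next
    case (Suc T)
    have "?P T + (\<integral>\<^sup>+ y. F y \<partial>ea_iter k (Suc T) s)
        = (\<integral>\<^sup>+ z. indicator ?running z + (\<integral>\<^sup>+ y. F y \<partial>ea_step_stopped k z) \<partial>ea_iter k T s)"
      by (simp add: nn_integral_bind_pmf measure_pmf.emeasure_eq_measure[symmetric] nn_integral_add)
    also have "\<dots> \<le> (\<integral>\<^sup>+ z. F z \<partial>ea_iter k T s)"
      by (intro nn_integral_mono step)
    finally have "(\<Sum>t<Suc T. ?P t) + (\<integral>\<^sup>+ y. F y \<partial>ea_iter k (Suc T) s)
        \<le> (\<Sum>t<T. ?P t) + (\<integral>\<^sup>+ z. F z \<partial>ea_iter k T s)"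
      by (simp add: add.assoc add_left_mono)
    then show ?case
      using Suc.IH by order
  qed
  have "(\<Sum>t<T. ?P t) \<le> F s" for T
    using partial_sums[of T] by (rule order_trans[rotated]) simp
  then show ?thesis
    unfolding ea_remaining_def by (intro suminf_le_const) (auto intro: summableI)
qed

lemma level_time_le:
  assumes "d \<le> n"
  shows "level_time k n d 0 \<le> real k"
proof -
  have "(1 - real d * single_flip_prob n) ^ j \<le> 1" for j
    using single_flip_prob_le[OF assms] single_flip_prob_nonneg[of n] by (intro power_le_one) auto
  then show ?thesis
    using sum_mono[of "{..<k}" "\<lambda>j. (1 - real d * single_flip_prob n) ^ j" "\<lambda>_. 1"]
    by (simp add: level_time_def)
qed

lemma level_time_le_inverse:
  assumes "1 \<le> d" "d \<le> n"
  shows "level_time k n d 0 \<le> exp 1 * real n / real d"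
proof -
  define q where "q = 1 - real d * single_flip_prob n"
  have pos: "0 < real d / (exp 1 * real n)"
    using assms by simp
  have lower: "real d / (exp 1 * real n) \<le> 1 - q"
    using mult_left_mono[OF single_flip_prob_ge, of n "real d"] assms by (simp add: q_def)
  have "q \<ge> 0"
    using single_flip_prob_le[of d n] assms by (simp add: q_def)
  have "level_time k n d 0 \<le> 1 / (1 - q)"
    unfolding level_time_def q_def[symmetric] using pos lower \<open>q \<ge> 0\<close>
    by (simp add: sum_gp_strict divide_right_mono)
  also have "\<dots> \<le> 1 / (real d / (exp 1 * real n))"
    using pos lower by (intro divide_left_mono mult_pos_pos) auto
  finally show ?thesis
    by simp
qed

lemma potential_fresh_le:
  "potential k (x, 0) \<le> (\<Sum>i\<in>{1..dist_opt x}. min (real k) (exp 1 * real (length x) / real i))"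
  unfolding potential_fresh
  by (intro sum_mono) (auto intro!: level_time_le level_time_le_inverse simp: dist_opt_def)

lemma sum_inverse_le_ln_ratio:
  assumes "1 \<le> m" "m \<le> d"
  shows "(\<Sum>i\<in>{m<..d}. 1 / real i) \<le> ln (real d) - ln (real m)"
  using assms(2)
proof (induction d rule: dec_induct)
  case (step d)
  have "1 / real (Suc d) \<le> ln (real (Suc d)) - ln (real d)"
  proof -
    have "ln (real d / real (Suc d)) \<le> real d / real (Suc d) - 1"
      using assms step by (intro ln_le_minus_one) auto
    also have "\<dots> = - (1 / real (Suc d))"
      by (simp add: field_simps)
    finally show ?thesis
      using assms step by (simp add: ln_div)
  qed
  moreover have "{m<..Suc d} = insert (Suc d) {m<..d}"
    using step by auto
  ultimately show ?case
    using step by simp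
qed simp

lemma sum_min_inverse_le:
  fixes a \<kappa> B :: real
  assumes "0 < a" "0 < \<kappa>" "1 \<le> B" "real d * \<kappa> \<le> a * B"
  shows "(\<Sum>i\<in>{1..d}. min \<kappa> (a / real i)) \<le> a + \<kappa> + a * ln B"
proof -
  define m where "m = nat \<lceil>a / \<kappa>\<rceil>"
  have "0 < a / \<kappa>"
    using assms by simp
  then have m: "a / \<kappa> \<le> real m" "real m < a / \<kappa> + 1"
    unfolding m_def by linarith+
  with \<open>0 < a / \<kappa>\<close> have "1 \<le> m"
    by (cases m) auto
  have "real m * \<kappa> \<le> (a / \<kappa> + 1) * \<kappa>"
    using m assms by (intro mult_right_mono) auto
  also have "\<dots> = a + \<kappa>"
    using assms by (simp add: field_simps)
  finally have "real m * \<kappa> \<le> a + \<kappa>" .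
  have "0 \<le> a * ln B"
    using assms by simp
  have head: "(\<Sum>i\<in>{1..j}. min \<kappa> (a / real i)) \<le> real j * \<kappa>" for j
    using sum_mono[of "{1..j}" "\<lambda>i. min \<kappa> (a / real i)" "\<lambda>_. \<kappa>"] by simp
  show ?thesis
  proof (cases "d \<le> m")
    case True
    then have "real d * \<kappa> \<le> real m * \<kappa>"
      using assms by (intro mult_right_mono) auto
    then show ?thesis
      using head[of d] \<open>real m * \<kappa> \<le> a + \<kappa>\<close> \<open>0 \<le> a * ln B\<close> by linarith
  next
    case False
    have "(\<Sum>i\<in>{m<..d}. 1 / real i) \<le> ln (real d) - ln (real m)"
      using sum_inverse_le_ln_ratio[of m d] \<open>1 \<le> m\<close> False by simp
    also have "\<dots> = ln (real d / real m)"
      using \<open>1 \<le> m\<close> False by (simp add: ln_div)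
    also have "\<dots> \<le> ln B"
    proof -
      have "real d / real m \<le> real d / (a / \<kappa>)"
        using m assms \<open>0 < a / \<kappa>\<close> \<open>1 \<le> m\<close> by (intro divide_left_mono mult_pos_pos) auto
      also have "\<dots> \<le> B"
        using assms by (simp add: field_simps)
      finally show ?thesis
        using \<open>1 \<le> m\<close> False assms by (subst ln_le_cancel_iff) auto
    qed
    finally have "(\<Sum>i\<in>{m<..d}. 1 / real i) \<le> ln B" .
    from mult_left_mono[OF this, of a] have tail: "(\<Sum>i\<in>{m<..d}. a * (1 / real i)) \<le> a * ln B"
      using assms by (simp add: sum_distrib_left)
    have "{1..d} = {1..m} \<union> {m<..d}"
      using False by auto
    then have "(\<Sum>i\<in>{1..d}. min \<kappa> (a / real i))
        = (\<Sum>i\<in>{1..m}. min \<kappa> (a / real i)) + (\<Sum>i\<in>{m<..d}. min \<kappa> (a / real i))"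
      by (auto intro: sum.union_disjoint)
    also have "(\<Sum>i\<in>{m<..d}. min \<kappa> (a / real i)) \<le> (\<Sum>i\<in>{m<..d}. a * (1 / real i))"
      by (intro sum_mono) auto
    finally show ?thesis
      using head[of m] tail \<open>real m * \<kappa> \<le> a + \<kappa>\<close> by linarith
  qed
qed

lemma potential_near_optimum_le:
  assumes "length x = n" "1 \<le> ln (real n)"
    and "real (dist_opt x) \<le> 2 * exp 1 * real n * ln (real n) / real k"
  shows "potential k (x, 0) \<le> exp 1 * real n + real k + exp 1 * real n * ln (2 * ln (real n))"
proof (cases "k = 0")
  case True
  then have "potential k (x, 0) = 0"
    using assms(3) by (simp add: potential_fresh)
  with assms(2) show ?thesis
    by simp
next
  case False
  have "0 < real n"
    using assms(2) by (cases "n = 0") auto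
  have "real (dist_opt x) * real k \<le> exp 1 * real n * (2 * ln (real n))"
    using assms(3) False by (simp add: field_simps)
  then have "(\<Sum>i\<in>{1..dist_opt x}. min (real k) (exp 1 * real n / real i))
      \<le> exp 1 * real n + real k + exp 1 * real n * ln (2 * ln (real n))"
    using False \<open>0 < real n\<close> assms(2) by (intro sum_min_inverse_le) auto
  with potential_fresh_le[of k x] assms(1) show ?thesis
    by simp
qed

lemma ea_remaining_near_optimum:
  assumes "length x = n" "k \<le> n" "exp 1 \<le> ln (real n)"
    and "real (dist_opt x) \<le> 2 * exp 1 * real n * ln (real n) / real k"
  shows "ea_remaining k (x, 0) \<le> ennreal ((3 * exp 1 + 1) * real n * ln (ln (real n)))"
proof -
  let ?L = "ln (ln (real n))"
  let ?a = "exp 1 * real n"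
  have "1 \<le> ln (real n)"
    using assms(3) exp_ge_add_one_self[of 1] by linarith
  then have "0 < real n"
    by (cases "n = 0") auto
  have "1 \<le> ?L"
    using assms(3) \<open>1 \<le> ln (real n)\<close>
    by (subst ln_exp[of 1, symmetric], subst ln_le_cancel_iff) auto
  have "ln (2 * ln (real n)) = ln 2 + ?L"
    using \<open>1 \<le> ln (real n)\<close> by (simp add: ln_mult)
  then have "ln (2 * ln (real n)) \<le> 2 * ?L"
    using ln_2_less_1 \<open>1 \<le> ?L\<close> by linarith
  then have "?a * ln (2 * ln (real n)) \<le> ?a * (2 * ?L)"
    using \<open>0 < real n\<close> by (intro mult_left_mono) auto
  moreover have "?a \<le> ?a * ?L"
    using \<open>0 < real n\<close> \<open>1 \<le> ?L\<close> by simp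
  moreover have "real k \<le> real n * ?L"
    using assms(2) \<open>1 \<le> ?L\<close> mult_mono[of "real k" "real n" 1 ?L] by simp
  moreover note potential_near_optimum_le[OF assms(1) \<open>1 \<le> ln (real n)\<close> assms(4)]
  ultimately have "potential k (x, 0) \<le> (3 * exp 1 + 1) * real n * ?L"
    by (simp add: algebra_simps)
  then have "ennreal (potential k (x, 0)) \<le> ennreal ((3 * exp 1 + 1) * real n * ?L)"
    by (rule ennreal_leI)
  moreover have "ea_remaining k (x, 0) \<le> ennreal (potential k (x, 0))"
    by (rule ea_remaining_le_potential) (rule potential_drift)
  ultimately show ?thesis
    by order
qed

theorem lemma5p3:
  fixes lam k :: "nat \<Rightarrow> nat"
  assumes "(\<lambda>n. real (lam n)) \<in> \<Theta>(\<lambda>n. ln (real n))"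
    and "(\<lambda>n. real (k n)) \<in> \<Theta>(\<lambda>n. real (lam n) * ln (real n))"
  shows "\<exists>C>0. eventually (\<lambda>n. \<forall>x::bool list. length x = n \<longrightarrow>
            real (dist_opt x) \<le> 2 * exp 1 * real n * ln (real n) / real (k n) \<longrightarrow>
            ea_remaining (k n) (x, 0) \<le> ennreal (C * real n * ln (ln (real n)))) at_top"
proof -
  have "(\<lambda>n. real (lam n) * ln (real n)) \<in> O(\<lambda>n. ln (real n) * ln (real n))"
    using bigthetaD1[OF assms(1)] by (rule landau_o.big.mult_right)
  with bigthetaD1[OF assms(2)] have "(\<lambda>n. real (k n)) \<in> O(\<lambda>n. ln (real n) * ln (real n))"
    by (rule landau_o.big_trans)
  moreover have "(\<lambda>n::nat. ln (real n) * ln (real n)) \<in> o(\<lambda>n. real n)"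
    by real_asymp
  ultimately have "(\<lambda>n. real (k n)) \<in> o(\<lambda>n. real n)"
    by (rule landau_o.big_small_trans)
  then have "eventually (\<lambda>n. real (k n) \<le> real n) at_top"
    using landau_o.smallD[of "\<lambda>n. real (k n)" at_top "\<lambda>n. real n" 1] by simp
  moreover have "eventually (\<lambda>n::nat. exp 1 \<le> ln (real n)) at_top"
    by real_asymp
  ultimately have "eventually (\<lambda>n. \<forall>x::bool list. length x = n \<longrightarrow>
            real (dist_opt x) \<le> 2 * exp 1 * real n * ln (real n) / real (k n) \<longrightarrow>
            ea_remaining (k n) (x, 0) \<le> ennreal ((3 * exp 1 + 1) * real n * ln (ln (real n)))) at_top"
    by eventually_elim (auto intro: ea_remaining_near_optimum)
  moreover have "(0::real) < 3 * exp 1 + 1"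
    by (simp add: add_pos_pos)
  ultimately show ?thesis
    by blast
qed

end
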